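(* Let $\pi=\pi_1\pi_2\cdots\pi_n$ be a signed permutation on $\{0,1,\dots,n-1\}$, and let $X$ and $f:X\to X-1$ be the signed set on $[n]$ and bijection determined by $\pi$ (i.e. $\pi$ is the representation of $f$). If there is an index $i$ such that $\pi_i$ is a signed fixed point (i.e. $\pi_i=i$ or $\pi_i=\bar i$) and the entry $\pi_i$ and the entry of $\pi$ with underlying value $i-1$ have the same sign (both barred or both unbarred), then $f$ has a fixed point.
   Context: A signed permutation on a set $S$ of integers is an arrangement of the elements of $S$ in which some entries carry a bar; a bar is regarded as a sign. A signed set on $[n]=\{1,\dots,n\}$ is $[n]$ with some elements barred. For a signed set $X$ on $[n]$, $X-1$ is obtained by subtracting $1$ from each element using the rule $\bar i-1=\overline{i-1}$; conversely addition uses $\bar i+1=\overline{i+1}$. Bijections $f:X\to X-1$ (over all signed sets $X$ on $[n]$) correspond bijectively to signed permutations $\pi=\pi_1\cdots\pi_n$ of $\{0,1,\dots,n-1\}$ as follows: list $X=\{\sigma_1,\dots,\sigma_n\}$ with $\sigma_i$ having underlying value $i$, and set $\pi_i=f(\sigma_i)$; conversely the entries of $\pi$ form the signed set $X-1$, which determines $X=(X-1)+1$ and hence $f$. This $\pi$ is called the representation of $f$. A fixed point of $f$ is an $x\in X$ with $f(x)=x$ as signed elements. *)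

theory Defs
  imports Main
begin

type_synonym signed = "nat \<times> bool"

definition uval :: "signed \<Rightarrow> nat" where "uval x = fst x"
definition barred :: "signed \<Rightarrow> bool" where "barred x = snd x"

definition signed_set_on :: "nat \<Rightarrow> signed set \<Rightarrow> bool" where
  "signed_set_on n X \<longleftrightarrow> bij_betw uval X {1..n}"

definition sshift_down :: "signed set \<Rightarrow> signed set" where
  "sshift_down X = (\<lambda>(v, b). (v - 1, b)) ` X"
definition sshift_up :: "signed set \<Rightarrow> signed set" where
  "sshift_up X = (\<lambda>(v, b). (v + 1, b)) ` X"

definition signed_perm :: "nat \<Rightarrow> (nat \<Rightarrow> signed) \<Rightarrow> bool" where
  "signed_perm n \<pi> \<longleftrightarrow> bij_betw (uval \<circ> \<pi>) {1..n} {0..<n}"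

text \<open>pi is the representation of the bijection f : X -> X - 1:
  X is the signed set (X-1)+1 where X-1 is the set of entries of pi,
  f is a bijection X -> X-1, and f(sigma_i) = pi_i where sigma_i is the element of X
  with underlying value i.\<close>
definition represents :: "nat \<Rightarrow> (nat \<Rightarrow> signed) \<Rightarrow> signed set \<Rightarrow> (signed \<Rightarrow> signed) \<Rightarrow> bool" where
  "represents n \<pi> X f \<longleftrightarrow>
     signed_set_on n X \<and>
     sshift_down X = \<pi> ` {1..n} \<and>
     X = sshift_up (\<pi> ` {1..n}) \<and>
     bij_betw f X (sshift_down X) \<and>
     (\<forall>x\<in>X. f x = \<pi> (uval x))"

end

theory Submission
  imports Defs
begin

text \<open>If \<open>\<pi>\<^sub>i\<close> is a signed fixed point and the entry \<open>\<pi>\<^sub>j\<close> with underlying value \<open>i - 1\<close>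
  carries the same sign, then \<open>\<pi>\<^sub>j + 1\<close> is an element of \<open>X\<close> with underlying value \<open>i\<close>
  and the sign of \<open>\<pi>\<^sub>i\<close>; so it equals \<open>\<pi>\<^sub>i\<close> and \<open>f\<close> sends it to \<open>\<pi>\<^sub>i\<close>, i.e. to itself.\<close>

lemma signed_eqI: "uval x = uval y \<Longrightarrow> barred x = barred y \<Longrightarrow> x = y"
  by (simp add: uval_def barred_def prod_eq_iff)

lemma represents_apply: "represents n \<pi> X f \<Longrightarrow> x \<in> X \<Longrightarrow> f x = \<pi> (uval x)"
  by (simp add: represents_def)

lemma represents_succ_entry_mem:
  assumes "represents n \<pi> X f" and "j \<in> {1..n}"
  shows "(uval (\<pi> j) + 1, barred (\<pi> j)) \<in> X"
proof -
  have "X = sshift_up (\<pi> ` {1..n})"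
    using assms(1) by (simp add: represents_def)
  then show ?thesis
    using assms(2) by (force simp: sshift_up_def uval_def barred_def)
qed

theorem lemma1:
  fixes n :: nat and \<pi> :: "nat \<Rightarrow> signed" and X :: "signed set" and f :: "signed \<Rightarrow> signed"
  assumes "signed_perm n \<pi>"
    and "represents n \<pi> X f"
    and "\<exists>i\<in>{1..n}. uval (\<pi> i) = i \<and>
           (\<exists>j\<in>{1..n}. uval (\<pi> j) = i - 1 \<and> barred (\<pi> j) = barred (\<pi> i))"
  shows "\<exists>x\<in>X. f x = x"
proof -
  obtain i j where i: "i \<in> {1..n}" "uval (\<pi> i) = i"
    and j: "j \<in> {1..n}" "uval (\<pi> j) = i - 1" "barred (\<pi> j) = barred (\<pi> i)"
    using assms(3) by blast
  define x where "x = (uval (\<pi> j) + 1, barred (\<pi> j))"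
  have "x \<in> X"
    unfolding x_def using represents_succ_entry_mem[OF assms(2) j(1)] .
  have "x = \<pi> i"
    using i j by (intro signed_eqI) (simp_all add: x_def uval_def barred_def)
  then have "f x = x"
    using represents_apply[OF assms(2) \<open>x \<in> X\<close>] i(2) by (simp add: x_def uval_def)
  with \<open>x \<in> X\<close> show ?thesis by blast
qed

end
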